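(* Let $\mathbf v=(v_1,\dots,v_m)$ and $\mathbf k=(k_1,\dots,k_m)$ be $m$-tuples of positive integers with $\mathbf v\ge\mathbf k$, and let $t\le m$ be a positive integer with $t\le\sum_i k_i$. Then \[ C(\mathbf v,\mathbf k,t)\ \ge\ \max_{\{i_1,\dots,i_t\}\subseteq\{1,\dots,m\}}\left\lceil\frac{v_{i_1}}{k_{i_1}}\left\lceil\frac{v_{i_2}}{k_{i_2}}\cdots\left\lceil\frac{v_{i_t}}{k_{i_t}}\right\rceil\cdots\right\rceil\right\rceil, \] where the maximum is over all sets of $t$ distinct indices (taken in any order).
   Context: Let $X_1,\dots,X_m$ be pairwise disjoint sets with $|X_i|=v_i$. A block is an $m$-tuple $(B_1,\dots,B_m)$ with $B_i\subseteq X_i$, $|B_i|=k_i$. An $m$-tuple of sets $(T_1,\dots,T_m)$ is $(\mathbf v,\mathbf k,t)$-admissible if $T_i\subseteq X_i$, $|T_i|\le k_i$ for all $i$ and $\sum_i|T_i|=t$; it is contained in a block if $T_i\subseteq B_i$ for all $i$. A generalized covering design ${\rm GC}(\mathbf v,\mathbf k,t)$ is a finite family (repetitions allowed) of blocks containing every admissible tuple in at least one block; $C(\mathbf v,\mathbf k,t)$ is the minimum number of blocks of such a design. *)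

theory Defs
  imports Complex_Main
begin

text \<open>Convention: the parts are indexed by i < m (0-based). The pairwise disjoint
ground sets X_i are modelled as X_i = {..< v i}, disjointness being implicit in the
indexing by i. An m-tuple of sets is a function nat \<Rightarrow> nat set (only values at i < m matter).\<close>

definition gc_block :: "nat \<Rightarrow> (nat \<Rightarrow> nat) \<Rightarrow> (nat \<Rightarrow> nat) \<Rightarrow> (nat \<Rightarrow> nat set) \<Rightarrow> bool" where
  "gc_block m v k B \<longleftrightarrow> (\<forall>i<m. B i \<subseteq> {..< v i} \<and> card (B i) = k i)"

definition gc_admissible :: "nat \<Rightarrow> (nat \<Rightarrow> nat) \<Rightarrow> (nat \<Rightarrow> nat) \<Rightarrow> nat \<Rightarrow> (nat \<Rightarrow> nat set) \<Rightarrow> bool" where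
  "gc_admissible m v k t T \<longleftrightarrow>
     (\<forall>i<m. T i \<subseteq> {..< v i} \<and> card (T i) \<le> k i) \<and> (\<Sum>i<m. card (T i)) = t"

definition gc_contained :: "nat \<Rightarrow> (nat \<Rightarrow> nat set) \<Rightarrow> (nat \<Rightarrow> nat set) \<Rightarrow> bool" where
  "gc_contained m T B \<longleftrightarrow> (\<forall>i<m. T i \<subseteq> B i)"

text \<open>A generalized covering design: a finite family of blocks (a list, so repetitions allowed).\<close>
definition is_GC :: "nat \<Rightarrow> (nat \<Rightarrow> nat) \<Rightarrow> (nat \<Rightarrow> nat) \<Rightarrow> nat \<Rightarrow> (nat \<Rightarrow> nat set) list \<Rightarrow> bool" where
  "is_GC m v k t D \<longleftrightarrow> (\<forall>B\<in>set D. gc_block m v k B) \<and>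
     (\<forall>T. gc_admissible m v k t T \<longrightarrow> (\<exists>B\<in>set D. gc_contained m T B))"

definition C_GC :: "nat \<Rightarrow> (nat \<Rightarrow> nat) \<Rightarrow> (nat \<Rightarrow> nat) \<Rightarrow> nat \<Rightarrow> nat" where
  "C_GC m v k t = (LEAST n. \<exists>D. is_GC m v k t D \<and> length D = n)"

fun nested_ceil :: "(nat \<Rightarrow> nat) \<Rightarrow> (nat \<Rightarrow> nat) \<Rightarrow> nat list \<Rightarrow> nat" where
  "nested_ceil v k [] = 1"
| "nested_ceil v k (i # is) = nat \<lceil>real (v i) / real (k i) * real (nested_ceil v k is)\<rceil>"

end

theory Submission
  imports Defs "HOL-Library.FuncSet"
begin

text \<open>Fix distinct indices \<open>i\<^sub>1, \<dots>, i\<^sub>t\<close>. A design must in particular cover every admissible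
  tuple consisting of one point in each of the parts \<open>i\<^sub>1, \<dots>, i\<^sub>t\<close>. For a point \<open>x\<close> of part
  \<open>i\<^sub>1\<close>, the blocks containing \<open>x\<close> cover all such tuples on the remaining indices, so by
  induction there are at least \<open>N = \<lceil>v\<^sub>i\<^sub>2/k\<^sub>i\<^sub>2 \<lceil>\<dots>\<rceil>\<rceil>\<close> of them. Double counting the pairs
  (point of part \<open>i\<^sub>1\<close>, block containing it) gives \<open>v\<^sub>i\<^sub>1 N \<le> k\<^sub>i\<^sub>1 |D|\<close>, whence the bound.\<close>

definition covers_transversals ::
    "(nat \<Rightarrow> nat) \<Rightarrow> nat set \<Rightarrow> (nat \<Rightarrow> nat set) list \<Rightarrow> bool" where
  "covers_transversals v I D \<longleftrightarrow>
     (\<forall>p. (\<forall>j\<in>I. p j < v j) \<longrightarrow> (\<exists>B\<in>set D. \<forall>j\<in>I. p j \<in> B j))"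

lemma sum_length_filter_mem:
  assumes "finite S" "\<forall>B\<in>set D. f B \<subseteq> S"
  shows "(\<Sum>x\<in>S. length (filter (\<lambda>B. x \<in> f B) D)) = (\<Sum>B\<leftarrow>D. card (f B))"
  using assms(2)
proof (induction D)
  case Nil
  then show ?case by simp
next
  case (Cons B D)
  have "(\<Sum>x\<in>S. length (filter (\<lambda>B'. x \<in> f B') (B # D)))
      = (\<Sum>x\<in>S. of_bool (x \<in> f B)) + (\<Sum>x\<in>S. length (filter (\<lambda>B. x \<in> f B) D))"
    unfolding sum.distrib[symmetric] by (intro sum.cong) auto
  also have "(\<Sum>x\<in>S. of_bool (x \<in> f B) :: nat) = card (f B)"
    using Cons.prems \<open>finite S\<close> by (simp add: Int_absorb1)
  finally show ?case using Cons by simp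
qed

lemma covers_transversals_filter:
  assumes "covers_transversals v (insert i I) D" "i \<notin> I" "x < v i"
  shows "covers_transversals v I (filter (\<lambda>B. x \<in> B i) D)"
  unfolding covers_transversals_def
proof (intro allI impI)
  fix p assume "\<forall>j\<in>I. p j < v j"
  then have "\<forall>j\<in>insert i I. (p(i := x)) j < v j"
    using \<open>x < v i\<close> by auto
  then obtain B where "B \<in> set D" "\<forall>j\<in>insert i I. (p(i := x)) j \<in> B j"
    using assms(1) unfolding covers_transversals_def by blast
  then show "\<exists>B\<in>set (filter (\<lambda>B. x \<in> B i) D). \<forall>j\<in>I. p j \<in> B j"
    using \<open>i \<notin> I\<close> by (intro bexI[of _ B]) (auto split: if_splits)
qed

lemma nat_ceiling_le_if_mult_le:
  assumes "v * N \<le> k * L" "0 < k"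
  shows "nat \<lceil>real v / real k * real N\<rceil> \<le> L"
proof -
  have "real v * real N \<le> real k * real L"
    using assms(1) by (metis of_nat_le_iff of_nat_mult)
  then have "real v / real k * real N \<le> real L"
    using assms(2) by (simp add: field_simps)
  then show ?thesis
    by (simp add: ceiling_le_iff nat_le_iff)
qed

lemma nested_ceil_le_length_if_covers:
  assumes "\<forall>j\<in>set xs. 0 < k j" "distinct xs"
    and "\<forall>B\<in>set D. \<forall>j\<in>set xs. B j \<subseteq> {..<v j} \<and> card (B j) = k j"
    and "covers_transversals v (set xs) D"
  shows "nested_ceil v k xs \<le> length D"
  using assms
proof (induction xs arbitrary: D)
  case Nil
  then have "D \<noteq> []"
    unfolding covers_transversals_def by auto
  then show ?case by (cases D) auto
next
  case (Cons i xs)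
  define N where "N = nested_ceil v k xs"
  have through_point: "N \<le> length (filter (\<lambda>B. x \<in> B i) D)" if "x < v i" for x
    unfolding N_def
    using Cons.prems that by (intro Cons.IH covers_transversals_filter) auto
  have "v i * N \<le> (\<Sum>x<v i. length (filter (\<lambda>B. x \<in> B i) D))"
    using sum_mono[of "{..<v i}" "\<lambda>_. N"] through_point by simp
  also have "\<dots> = (\<Sum>B\<leftarrow>D. card (B i))"
    using Cons.prems(3) by (intro sum_length_filter_mem) auto
  also have "\<dots> = (\<Sum>B\<leftarrow>D. k i)"
    using Cons.prems(3) by (intro arg_cong[where f = sum_list] map_cong) auto
  also have "\<dots> = k i * length D"
    by (simp add: sum_list_triv)
  finally show ?case
    unfolding N_def nested_ceil.simps
    using Cons.prems(1) by (intro nat_ceiling_le_if_mult_le) auto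
qed

lemma exists_GC:
  assumes "\<forall>i<m. 0 < k i \<and> k i \<le> v i"
  shows "\<exists>D. is_GC m v k t D"
proof -
  let ?blocks = "PiE {..<m} (\<lambda>i. {S. S \<subseteq> {..<v i} \<and> card S = k i})"
  have "finite ?blocks"
    by (intro finite_PiE) auto
  then obtain D where D: "set D = ?blocks"
    by (meson finite_list)
  have "\<exists>B\<in>set D. gc_contained m T B" if T: "gc_admissible m v k t T" for T
  proof -
    have "\<exists>S. T i \<subseteq> S \<and> S \<subseteq> {..<v i} \<and> card S = k i" if "i < m" for i
      using T assms that unfolding gc_admissible_def by (intro exists_subset_between) auto
    then obtain S where S: "\<forall>i<m. T i \<subseteq> S i \<and> S i \<subseteq> {..<v i} \<and> card (S i) = k i"
      by metis
    then show ?thesis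
      using D unfolding gc_contained_def by (intro bexI[of _ "restrict S {..<m}"]) auto
  qed
  moreover have "gc_block m v k B" if "B \<in> set D" for B
    using that D unfolding gc_block_def by (auto simp: PiE_def Pi_def)
  ultimately show ?thesis
    unfolding is_GC_def by blast
qed

lemma C_GC_attained:
  assumes "\<forall>i<m. 0 < k i \<and> k i \<le> v i"
  shows "\<exists>D. is_GC m v k t D \<and> length D = C_GC m v k t"
  unfolding C_GC_def using exists_GC[OF assms] by (auto intro: LeastI_ex)

lemma gc_admissible_transversal:
  assumes "\<forall>i<m. 0 < k i" "set xs \<subseteq> {..<m}" "distinct xs" "length xs = t"
    and "\<forall>j\<in>set xs. p j < v j"
  shows "gc_admissible m v k t (\<lambda>j. if j \<in> set xs then {p j} else {})"
proof -
  have "(\<Sum>i<m. card (if i \<in> set xs then {p i} else {})) = (\<Sum>i<m. of_bool (i \<in> set xs))"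
    by (intro sum.cong) auto
  also have "\<dots> = card (set xs)"
    using assms(2) by (simp add: Int_absorb1)
  also have "\<dots> = t"
    using assms(3,4) by (simp add: distinct_card)
  finally show ?thesis
    using assms(1,5) unfolding gc_admissible_def by auto
qed

lemma is_GC_covers_transversals:
  assumes "is_GC m v k t D" "\<forall>i<m. 0 < k i"
    and "set xs \<subseteq> {..<m}" "distinct xs" "length xs = t"
  shows "covers_transversals v (set xs) D"
  unfolding covers_transversals_def
proof (intro allI impI)
  fix p assume "\<forall>j\<in>set xs. p j < v j"
  with assms(2-5) have "gc_admissible m v k t (\<lambda>j. if j \<in> set xs then {p j} else {})"
    by (rule gc_admissible_transversal)
  then obtain B where B: "B \<in> set D" "\<forall>i<m. (if i \<in> set xs then {p i} else {}) \<subseteq> B i"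
    using assms(1) unfolding is_GC_def gc_contained_def by blast
  have "p j \<in> B j" if "j \<in> set xs" for j
    using B(2)[rule_format, of j] assms(3) that by auto
  with B(1) show "\<exists>B\<in>set D. \<forall>j\<in>set xs. p j \<in> B j"
    by blast
qed

lemma nested_ceil_le_C_GC:
  assumes "\<forall>i<m. 0 < k i \<and> k i \<le> v i"
    and "set xs \<subseteq> {..<m}" "distinct xs" "length xs = t"
  shows "nested_ceil v k xs \<le> C_GC m v k t"
proof -
  obtain D where D: "is_GC m v k t D" "length D = C_GC m v k t"
    using C_GC_attained[OF assms(1)] by blast
  have "nested_ceil v k xs \<le> length D"
  proof (rule nested_ceil_le_length_if_covers)
    show "\<forall>j\<in>set xs. 0 < k j"
      using assms(1,2) by auto
    show "\<forall>B\<in>set D. \<forall>j\<in>set xs. B j \<subseteq> {..<v j} \<and> card (B j) = k j"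
    proof (intro ballI)
      fix B j assume "B \<in> set D" "j \<in> set xs"
      then have "gc_block m v k B" "j < m"
        using D(1) assms(2) unfolding is_GC_def by auto
      then show "B j \<subseteq> {..<v j} \<and> card (B j) = k j"
        unfolding gc_block_def by blast
    qed
    show "covers_transversals v (set xs) D"
      using D(1) assms by (intro is_GC_covers_transversals) auto
  qed fact
  with D(2) show ?thesis
    by simp
qed

theorem corollary5p2:
  fixes m t :: nat and v k :: "nat \<Rightarrow> nat"
  assumes "\<forall>i<m. 0 < k i \<and> k i \<le> v i"
    and "0 < t" and "t \<le> m" and "t \<le> (\<Sum>i<m. k i)"
  shows "C_GC m v k t \<ge>
    Max {nested_ceil v k xs | xs. distinct xs \<and> length xs = t \<and> set xs \<subseteq> {..<m}}"
proof -
  let ?S = "{nested_ceil v k xs | xs. distinct xs \<and> length xs = t \<and> set xs \<subseteq> {..<m}}"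
  have "?S \<subseteq> nested_ceil v k ` {xs. set xs \<subseteq> {..<m} \<and> length xs = t}"
    by auto
  then have "finite ?S"
    by (rule finite_subset) (simp add: finite_lists_length_eq)
  moreover have "nested_ceil v k [0..<t] \<in> ?S"
    using assms(3) by auto
  ultimately show ?thesis
    using nested_ceil_le_C_GC[OF assms(1)] by (subst Max_le_iff) auto
qed

end
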